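(* Let $(X,b,m)$ be a weighted graph satisfying (C), (B), (M), and let $D\subseteq X$ be not $d_{\mathrm{comb}}$-relatively dense. Then there exists a sequence $(x_n)_{n\in\mathbb N}$ in $X$ such that for all $T>0$ and all $r\in[1,\infty]$, \[\lim_{n\to\infty}\|(S_{(\cdot)}\delta_{x_n})|_D\|_{L_r((0,T);\ell_2(D,m|_D))}=0,\] where $\delta_x=m(x)^{-1/2}\mathbf 1_{\{x\}}$.
   Context: Weighted graph $(X,b,m)$: $X$ countable, $m\colon X\to(0,\infty)$, $b$ symmetric non-negative with $b(x,x)=0$ and $\sum_yb(x,y)<\infty$. Paths are sequences $(x_0,\dots,x_k)$ with $b(x_j,x_{j+1})>0$. (C) connected; (B) $\sup_x\frac1{m(x)}\sum_yb(x,y)<\infty$; (M) $\sup_xm(x)<\infty$. Combinatorial metric $d_{\mathrm{comb}}(x,y)$: minimal number of steps of a path from $x$ to $y$ ($0$ if $x=y$). $D$ is $d_{\mathrm{comb}}$-relatively dense if $\inf\{R>0:\bigcup_{x\in D}\{y:d_{\mathrm{comb}}(x,y)\le R\}=X\}<\infty$. $H$ is the weighted Laplacian $Hf(x)=\frac1{m(x)}\sum_yb(x,y)(f(x)-f(y))$ on $\ell_2(X,m)$, $S_t=e^{-tH}$. *)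

theory Defs
  imports "HOL-Probability.Essential_Supremum" "HOL-Analysis.Analysis"
begin

text \<open>Weighted graph on a countable vertex type 'a (X = UNIV).\<close>
definition weighted_graph :: "('a::countable \<Rightarrow> 'a \<Rightarrow> real) \<Rightarrow> ('a \<Rightarrow> real) \<Rightarrow> bool" where
  "weighted_graph b m \<longleftrightarrow>
     (\<forall>x. m x > 0) \<and> (\<forall>x y. b x y = b y x) \<and> (\<forall>x y. b x y \<ge> 0) \<and>
     (\<forall>x. b x x = 0) \<and> (\<forall>x. (b x) summable_on UNIV)"

definition edge :: "('a \<Rightarrow> 'a \<Rightarrow> real) \<Rightarrow> 'a \<Rightarrow> 'a \<Rightarrow> bool" where
  "edge b x y \<longleftrightarrow> b x y > 0"

definition graph_connected :: "('a \<Rightarrow> 'a \<Rightarrow> real) \<Rightarrow> bool" where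
  "graph_connected b \<longleftrightarrow> (\<forall>x y. \<exists>k. (edge b ^^ k) x y)"

definition bounded_degree :: "('a \<Rightarrow> 'a \<Rightarrow> real) \<Rightarrow> ('a \<Rightarrow> real) \<Rightarrow> bool" where
  "bounded_degree b m \<longleftrightarrow> (\<exists>C. \<forall>x. (1 / m x) * (\<Sum>\<^sub>\<infinity>y. b x y) \<le> C)"

definition bounded_measure :: "('a \<Rightarrow> real) \<Rightarrow> bool" where
  "bounded_measure m \<longleftrightarrow> (\<exists>C. \<forall>x. m x \<le> C)"

definition d_comb :: "('a \<Rightarrow> 'a \<Rightarrow> real) \<Rightarrow> 'a \<Rightarrow> 'a \<Rightarrow> nat" where
  "d_comb b x y = (LEAST k. (edge b ^^ k) x y)"

definition rel_dense :: "('a \<Rightarrow> 'a \<Rightarrow> real) \<Rightarrow> 'a set \<Rightarrow> bool" where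
  "rel_dense b D \<longleftrightarrow> (\<exists>R::real. R > 0 \<and> (\<Union>x\<in>D. {y. real (d_comb b x y) \<le> R}) = UNIV)"

text \<open>Weighted Laplacian (bounded under (B)), its powers and the semigroup
  S_t = e^{-tH} given by the (norm-convergent, hence pointwise) exponential series.\<close>
definition laplacian :: "('a \<Rightarrow> 'a \<Rightarrow> real) \<Rightarrow> ('a \<Rightarrow> real) \<Rightarrow> ('a \<Rightarrow> real) \<Rightarrow> 'a \<Rightarrow> real" where
  "laplacian b m f x = (1 / m x) * (\<Sum>\<^sub>\<infinity>y. b x y * (f x - f y))"

definition semigroup :: "('a \<Rightarrow> 'a \<Rightarrow> real) \<Rightarrow> ('a \<Rightarrow> real) \<Rightarrow> real \<Rightarrow> ('a \<Rightarrow> real) \<Rightarrow> 'a \<Rightarrow> real" where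
  "semigroup b m t f y = (\<Sum>k. ((- t) ^ k / fact k) * ((laplacian b m ^^ k) f) y)"

definition delta :: "('a \<Rightarrow> real) \<Rightarrow> 'a \<Rightarrow> 'a \<Rightarrow> real" where
  "delta m x y = (if y = x then 1 / sqrt (m x) else 0)"

definition l2_norm_on :: "('a \<Rightarrow> real) \<Rightarrow> 'a set \<Rightarrow> ('a \<Rightarrow> real) \<Rightarrow> real" where
  "l2_norm_on m D f = sqrt (\<Sum>\<^sub>\<infinity>y\<in>D. m y * (f y)\<^sup>2)"

definition Lr_norm :: "ereal \<Rightarrow> real \<Rightarrow> (real \<Rightarrow> real) \<Rightarrow> ereal" where
  "Lr_norm r T g =
    (if r = \<infinity> then esssup (restrict_space lborel {0<..<T}) (\<lambda>t. ereal \<bar>g t\<bar>)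
     else (let I = (\<integral>\<^sup>+ t\<in>{0<..<T}. ennreal (\<bar>g t\<bar> powr real_of_ereal r) \<partial>lborel)
           in if I = \<infinity> then \<infinity> else ereal (enn2real I powr (1 / real_of_ereal r))))"

end

theory Submission
  imports Defs
begin

text \<open>Choose vertices x_n at combinatorial distance > n from D. The Laplacian only couples
  neighbours, so H^k \<delta>_x vanishes at distance > k from x, and on D the exponential series
  for S_t \<delta>_{x_n} reduces to its tail k > n. Under (B) with constant C, H is bounded by 2C
  both on \<ell>_\<infinity> and on \<ell>_1(X, m), whence |H^k \<delta>_x| \<le> (2C)^k / sqrt (m x) pointwise and
  \<parallel>H^k \<delta>_x\<parallel>_1 \<le> (2C)^k sqrt (m x). Since \<parallel>f\<parallel>_2^2 \<le> \<parallel>f\<parallel>_\<infinity> \<parallel>f\<parallel>_1, the factors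
  sqrt (m x) cancel and \<parallel>(S_t \<delta>_{x_n})|_D\<parallel>_2 \<le> \<Sum>_{k>n} (2CT)^k / k! for 0 < t < T. This
  tail of the exponential series tends to 0 and bounds every L_r((0,T)) norm up to the
  factor 1 + T.\<close>

lemma has_sum_sum_finite:
  fixes f :: "'i \<Rightarrow> 'a \<Rightarrow> 'b::topological_comm_monoid_add"
  assumes "finite I" and "\<And>i. i \<in> I \<Longrightarrow> (f i has_sum s i) A"
  shows "((\<lambda>x. \<Sum>i\<in>I. f i x) has_sum (\<Sum>i\<in>I. s i)) A"
  using assms by (induction I rule: finite_induct) (auto intro: has_sum_add)

lemma nonneg_summable_on_if_finite_sums_le:
  fixes f :: "'a \<Rightarrow> real"
  assumes "\<And>x. x \<in> A \<Longrightarrow> 0 \<le> f x" and "\<And>F. finite F \<Longrightarrow> F \<subseteq> A \<Longrightarrow> sum f F \<le> B"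
  shows "f summable_on A"
  using assms by (intro nonneg_bdd_above_summable_on bdd_aboveI) auto

lemma sum_sq_le_of_sup_l1_bounds:
  fixes f w :: "'a \<Rightarrow> real"
  assumes "\<And>y. y \<in> F \<Longrightarrow> 0 \<le> w y" and "\<And>y. y \<in> F \<Longrightarrow> \<bar>f y\<bar> \<le> E / s"
    and "(\<Sum>y\<in>F. w y * \<bar>f y\<bar>) \<le> E * s" and "0 < s" and "0 \<le> E"
  shows "(\<Sum>y\<in>F. w y * (f y)\<^sup>2) \<le> E\<^sup>2"
proof -
  have "(\<Sum>y\<in>F. w y * (f y)\<^sup>2) \<le> (\<Sum>y\<in>F. w y * \<bar>f y\<bar> * (E / s))"
  proof (rule sum_mono)
    fix y assume "y \<in> F"
    then have sq: "(f y)\<^sup>2 \<le> \<bar>f y\<bar> * (E / s)"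
      using assms(2) mult_left_mono[of "\<bar>f y\<bar>" "E / s" "\<bar>f y\<bar>"]
      by (simp add: power2_eq_square abs_mult_self_eq)
    show "w y * (f y)\<^sup>2 \<le> w y * \<bar>f y\<bar> * (E / s)"
      using mult_left_mono[OF sq assms(1)[OF \<open>y \<in> F\<close>]] by (simp only: mult.assoc)
  qed
  also have "\<dots> = (\<Sum>y\<in>F. w y * \<bar>f y\<bar>) * (E / s)"
    by (rule sum_distrib_right[symmetric])
  also have "\<dots> \<le> (E * s) * (E / s)"
    using assms(3-5) by (intro mult_right_mono) auto
  also have "\<dots> = E\<^sup>2"
    using assms(4) by (simp add: power2_eq_square)
  finally show ?thesis .
qed

lemma borel_measurable_infsum_countable:
  fixes f :: "'b \<Rightarrow> 'a::countable \<Rightarrow> real"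
  assumes "\<And>y. (\<lambda>t. f t y) \<in> borel_measurable M" and "\<And>t. f t summable_on D"
  shows "(\<lambda>t. \<Sum>\<^sub>\<infinity>y\<in>D. f t y) \<in> borel_measurable M"
proof (cases "finite D")
  case True
  then show ?thesis using assms(1) by simp
next
  case False
  define e where "e = from_nat_into D"
  have bij: "bij_betw e UNIV D"
    using bij_betw_from_nat_into[OF countableI_type False] e_def by simp
  have "(\<lambda>i. f t (e i)) summable_on UNIV" for t
    using summable_on_reindex_bij_betw[OF bij] assms(2) by blast
  then have "(\<Sum>\<^sub>\<infinity>y\<in>D. f t y) = (\<Sum>i. f t (e i))" for t
    using infsum_reindex_bij_betw[OF bij, of "f t"]
    by (metis has_sum_imp_sums has_sum_infsum sums_unique)
  then show ?thesis
    using assms(1) by (simp add: borel_measurable_suminf)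
qed

section \<open>L_r norms on (0, T)\<close>

lemma Lr_norm_nonneg:
  assumes "0 < T"
  shows "0 \<le> Lr_norm r T g"
proof (cases "r = \<infinity>")
  case True
  let ?M = "restrict_space lborel {0<..<T}"
  have "emeasure ?M (space ?M) \<noteq> 0"
    using assms by (simp add: space_restrict_space emeasure_restrict_space)
  then have "0 = esssup ?M (\<lambda>t. 0 :: ereal)"
    by (simp add: esssup_const)
  also have "\<dots> \<le> esssup ?M (\<lambda>t. ereal \<bar>g t\<bar>)"
    by (rule esssup_mono) auto
  finally show ?thesis
    using True by (simp add: Lr_norm_def)
qed (simp add: Lr_norm_def Let_def)

lemma powr_inverse_le_one_plus:
  fixes T p :: real
  assumes "0 \<le> T" and "1 \<le> p"
  shows "T powr (1 / p) \<le> 1 + T"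
proof -
  have "T powr (1 / p) \<le> (1 + T) powr (1 / p)"
    using assms by (intro powr_mono2) auto
  also have "\<dots> \<le> (1 + T) powr 1"
    using assms by (intro powr_mono) auto
  finally show ?thesis
    using assms(1) by simp
qed

lemma set_nn_integral_powr_le:
  assumes "0 \<le> T" and "0 \<le> p" and bound: "\<And>t. t \<in> {0<..<T} \<Longrightarrow> \<bar>g t\<bar> \<le> E"
  shows "(\<integral>\<^sup>+ t\<in>{0<..<T}. ennreal (\<bar>g t\<bar> powr p) \<partial>lborel) \<le> ennreal (E powr p * T)"
proof -
  have "(\<integral>\<^sup>+ t\<in>{0<..<T}. ennreal (\<bar>g t\<bar> powr p) \<partial>lborel)
      \<le> (\<integral>\<^sup>+ t. ennreal (E powr p) * indicator {0<..<T} t \<partial>lborel)"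
  proof (rule nn_integral_mono)
    fix t
    have "t \<in> {0<..<T} \<Longrightarrow> \<bar>g t\<bar> powr p \<le> E powr p"
      using bound \<open>0 \<le> p\<close> by (intro powr_mono2) auto
    then show "ennreal (\<bar>g t\<bar> powr p) * indicator {0<..<T} t
        \<le> ennreal (E powr p) * indicator {0<..<T} t"
      by (cases "t \<in> {0<..<T}") (auto intro: ennreal_leI)
  qed
  also have "\<dots> = ennreal (E powr p * T)"
    using \<open>0 \<le> T\<close> by (simp add: nn_integral_cmult_indicator ennreal_mult)
  finally show ?thesis .
qed

lemma Lr_norm_le:
  assumes "0 < T" and "1 \<le> r"
    and meas: "(\<lambda>t. ereal \<bar>g t\<bar>) \<in> borel_measurable (restrict_space lborel {0<..<T})"
    and bound: "\<And>t. t \<in> {0<..<T} \<Longrightarrow> \<bar>g t\<bar> \<le> E"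
  shows "Lr_norm r T g \<le> ereal (E * (1 + T))"
proof -
  have "0 \<le> E"
    using bound[of "T / 2"] \<open>0 < T\<close> by auto
  show ?thesis
  proof (cases "r = \<infinity>")
    case True
    have "esssup (restrict_space lborel {0<..<T}) (\<lambda>t. ereal \<bar>g t\<bar>) \<le> ereal E"
      using meas bound by (intro esssup_I AE_I2) (auto simp: space_restrict_space)
    moreover have "E \<le> E * (1 + T)"
      using \<open>0 \<le> E\<close> \<open>0 < T\<close> by (simp add: mult_le_cancel_left1)
    ultimately show ?thesis
      using True by (simp add: Lr_norm_def order_trans)
  next
    case False
    then obtain p where r: "r = ereal p"
      using \<open>1 \<le> r\<close> by (cases r) auto
    have "1 \<le> p"
      using \<open>1 \<le> r\<close> r by simp
    let ?I = "\<integral>\<^sup>+ t\<in>{0<..<T}. ennreal (\<bar>g t\<bar> powr p) \<partial>lborel"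
    have I_le: "?I \<le> ennreal (E powr p * T)"
      using \<open>0 < T\<close> \<open>1 \<le> p\<close> bound by (intro set_nn_integral_powr_le) auto
    then have "?I \<noteq> \<infinity>"
      using ennreal_neq_top neq_top_trans by (metis infinity_ennreal_def)
    have "enn2real ?I powr (1 / p) \<le> (E powr p * T) powr (1 / p)"
      using enn2real_mono[OF I_le] \<open>1 \<le> p\<close> \<open>0 < T\<close> by (intro powr_mono2) auto
    also have "\<dots> = E * T powr (1 / p)"
      using \<open>1 \<le> p\<close> \<open>0 \<le> E\<close> by (simp add: powr_mult powr_powr)
    also have "\<dots> \<le> E * (1 + T)"
      using \<open>0 < T\<close> \<open>1 \<le> p\<close> \<open>0 \<le> E\<close> by (intro mult_left_mono powr_inverse_le_one_plus) auto
    finally show ?thesis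
      using \<open>?I \<noteq> \<infinity>\<close> False r by (simp add: Lr_norm_def Let_def)
  qed
qed

section \<open>Tails of the exponential series\<close>

definition exp_tail :: "real \<Rightarrow> nat \<Rightarrow> real" where
  "exp_tail c N = (\<Sum>k. if N \<le> k then c ^ k / fact k else 0)"

lemma sums_exp_tail:
  fixes c :: real
  shows "(\<lambda>k. if N \<le> k then c ^ k / fact k else 0) sums (exp c - (\<Sum>k<N. c ^ k / fact k))"
proof -
  have "(\<lambda>k. c ^ k / fact k) sums exp c"
    using exp_converges[of c] by (simp add: real_scaleR_def divide_inverse mult.commute)
  moreover have "(\<lambda>k. if k < N then c ^ k / fact k else 0) sums (\<Sum>k<N. c ^ k / fact k)"
    using sums_If_finite_set[of "{..<N}" "\<lambda>k. c ^ k / fact k"] by simp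
  ultimately have "(\<lambda>k. c ^ k / fact k - (if k < N then c ^ k / fact k else 0))
      sums (exp c - (\<Sum>k<N. c ^ k / fact k))"
    by (rule sums_diff)
  also have "(\<lambda>k. c ^ k / fact k - (if k < N then c ^ k / fact k else 0))
      = (\<lambda>k. if N \<le> k then c ^ k / fact k else 0)"
    by (auto simp: fun_eq_iff)
  finally show ?thesis .
qed

lemma summable_exp_tail_terms: "summable (\<lambda>k. if N \<le> k then (c :: real) ^ k / fact k else 0)"
  by (rule sums_summable[OF sums_exp_tail])

lemma exp_tail_eq: "exp_tail c N = exp c - (\<Sum>k<N. c ^ k / fact k)"
  unfolding exp_tail_def by (rule sums_unique[OF sums_exp_tail, symmetric])

lemma exp_tail_mono:
  assumes "0 \<le> c" and "c \<le> c'"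
  shows "exp_tail c N \<le> exp_tail c' N"
  unfolding exp_tail_def
  using assms by (intro suminf_le summable_exp_tail_terms) (auto intro: divide_right_mono power_mono)

lemma exp_tail_nonneg: "0 \<le> c \<Longrightarrow> 0 \<le> exp_tail c N"
  unfolding exp_tail_def by (intro suminf_nonneg summable_exp_tail_terms) auto

lemma exp_tail_tendsto_0: "exp_tail c \<longlonglongrightarrow> 0"
proof -
  have "(\<lambda>k. c ^ k / fact k) sums exp c"
    using sums_exp_tail[of 0 c] by simp
  then have "(\<lambda>N. exp c - (\<Sum>k<N. c ^ k / fact k)) \<longlonglongrightarrow> exp c - exp c"
    by (intro tendsto_diff tendsto_const) (simp add: sums_def)
  then show ?thesis
    by (simp add: exp_tail_eq[abs_def])
qed

section \<open>Finite propagation of the Laplacian\<close>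

lemma laplacian_power_delta_support:
  assumes "weighted_graph b m" and "(laplacian b m ^^ k) (delta m x) y \<noteq> 0"
  shows "\<exists>j\<le>k. (edge b ^^ j) y x"
  using assms(2)
proof (induction k arbitrary: y)
  case 0
  then show ?case
    by (simp add: delta_def split: if_splits)
next
  case (Suc k)
  let ?f = "(laplacian b m ^^ k) (delta m x)"
  show ?case
  proof (rule ccontr)
    assume no_path: "\<not> (\<exists>j\<le>Suc k. (edge b ^^ j) y x)"
    have "?f y = 0"
      using Suc.IH no_path le_SucI by blast
    moreover have "?f z = 0" if "edge b y z" for z
      using Suc.IH[of z] no_path that by (metis Suc_le_mono relpowp_Suc_I2)
    moreover have "0 \<le> b y z" for z
      using assms(1) by (simp add: weighted_graph_def)
    ultimately have "b y z * (?f y - ?f z) = 0" for z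
      by (cases "edge b y z") (auto simp: edge_def not_less intro: antisym)
    then have "(\<Sum>\<^sub>\<infinity>z. b y z * (?f y - ?f z)) = 0"
      by (rule infsum_0)
    then have "laplacian b m ?f y = 0"
      by (simp add: laplacian_def)
    with Suc.prems show False
      by simp
  qed
qed

lemma laplacian_power_delta_vanishes:
  assumes "weighted_graph b m" and "k < d_comb b y x"
  shows "(laplacian b m ^^ k) (delta m x) y = 0"
proof (rule ccontr)
  assume "(laplacian b m ^^ k) (delta m x) y \<noteq> 0"
  then obtain j where "j \<le> k" and "(edge b ^^ j) y x"
    using laplacian_power_delta_support[OF assms(1)] by blast
  then have "d_comb b y x \<le> k"
    unfolding d_comb_def by (meson Least_le le_trans)
  with assms(2) show False
    by simp
qed

lemma not_rel_dense_imp_far_sequence: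
  assumes "\<not> rel_dense b D"
  obtains xs where "\<And>n y. y \<in> D \<Longrightarrow> n < d_comb b y (xs n)"
proof -
  have "\<exists>p. \<forall>y\<in>D. n < d_comb b y p" for n :: nat
  proof -
    have "(\<Union>y\<in>D. {p. real (d_comb b y p) \<le> real n + 1}) \<noteq> UNIV"
      using assms unfolding rel_dense_def by (metis add_nonneg_pos of_nat_0_le_iff zero_less_one)
    then obtain p where "p \<notin> (\<Union>y\<in>D. {p. real (d_comb b y p) \<le> real n + 1})"
      by blast
    then show ?thesis
      by (intro exI[of _ p]) (auto simp: not_le)
  qed
  then show ?thesis
    using that by metis
qed

section \<open>Laplacian and semigroup under a degree bound\<close>

lemma borel_measurable_semigroup [measurable]:
  "(\<lambda>t. semigroup b m t f y) \<in> borel_measurable borel"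
  unfolding semigroup_def by measurable

locale degree_bounded_graph =
  fixes b :: "'a::countable \<Rightarrow> 'a \<Rightarrow> real" and m :: "'a \<Rightarrow> real" and C :: real
  assumes weighted_graph: "weighted_graph b m"
    and degree_le: "(\<Sum>\<^sub>\<infinity>y. b x y) \<le> C * m x"
begin

lemma m_pos: "0 < m x"
  and b_sym: "b x y = b y x"
  and b_nonneg: "0 \<le> b x y"
  and b_summable: "b x summable_on UNIV"
  using weighted_graph unfolding weighted_graph_def by auto

lemma C_nonneg: "0 \<le> C"
proof -
  have "0 \<le> (\<Sum>\<^sub>\<infinity>y. b x y)"
    by (simp add: infsum_nonneg b_nonneg)
  then have "0 \<le> C * m x"
    using degree_le order_trans by blast
  then show ?thesis
    using m_pos[of x] by (simp add: zero_le_mult_iff)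
qed

lemma summable_on_b_mult:
  assumes "\<And>z. \<bar>f z\<bar> \<le> S"
  shows "(\<lambda>z. b y z * f z) summable_on UNIV"
proof -
  have majorant: "(\<lambda>z. b y z * S) summable_on UNIV"
    using b_summable by (rule summable_on_cmult_left)
  have "norm (b y z * f z) \<le> b y z * S" for z
    using assms[of z] b_nonneg[of y z] by (simp add: abs_mult mult_left_mono)
  then have "(\<lambda>z. norm (b y z * f z)) summable_on UNIV"
    by (rule Infinite_Sum.abs_summable_on_comparison_test'[OF majorant])
  then show ?thesis
    by (rule Infinite_Sum.abs_summable_summable)
qed

lemma laplacian_abs_le:
  assumes "\<And>z. \<bar>f z\<bar> \<le> S"
  shows "m y * \<bar>laplacian b m f y\<bar> \<le> (\<Sum>\<^sub>\<infinity>z. b y z) * \<bar>f y\<bar> + (\<Sum>\<^sub>\<infinity>z. b y z * \<bar>f z\<bar>)"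
proof -
  let ?g = "\<lambda>z. b y z * (f y - f z)"
  have "\<bar>f y - f z\<bar> \<le> 2 * S" for z
    using assms[of y] assms[of z] by linarith
  then have "?g summable_on UNIV"
    by (rule summable_on_b_mult)
  then have abs_g: "(\<lambda>z. \<bar>?g z\<bar>) summable_on UNIV"
    using summable_on_iff_abs_summable_on_real[of ?g UNIV] by simp
  have diag: "(\<lambda>z. b y z * \<bar>f y\<bar>) summable_on UNIV"
    using b_summable by (rule summable_on_cmult_left)
  have off_diag: "(\<lambda>z. b y z * \<bar>f z\<bar>) summable_on UNIV"
    using assms by (intro summable_on_b_mult) auto
  have "m y * \<bar>laplacian b m f y\<bar> = \<bar>\<Sum>\<^sub>\<infinity>z. ?g z\<bar>"
    using m_pos[of y] by (simp add: laplacian_def abs_mult)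
  also have "\<dots> \<le> (\<Sum>\<^sub>\<infinity>z. \<bar>?g z\<bar>)"
    using norm_infsum_bound[of ?g UNIV] abs_g by simp
  also have "\<dots> \<le> (\<Sum>\<^sub>\<infinity>z. b y z * \<bar>f y\<bar> + b y z * \<bar>f z\<bar>)"
  proof (rule infsum_mono[OF abs_g summable_on_add[OF diag off_diag]])
    fix z
    have "b y z * \<bar>f y - f z\<bar> \<le> b y z * (\<bar>f y\<bar> + \<bar>f z\<bar>)"
      using b_nonneg[of y z] by (intro mult_left_mono) auto
    then show "\<bar>?g z\<bar> \<le> b y z * \<bar>f y\<bar> + b y z * \<bar>f z\<bar>"
      using b_nonneg[of y z] by (simp add: abs_mult distrib_left)
  qed
  also have "\<dots> = (\<Sum>\<^sub>\<infinity>z. b y z) * \<bar>f y\<bar> + (\<Sum>\<^sub>\<infinity>z. b y z * \<bar>f z\<bar>)"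
    using diag off_diag b_summable by (simp add: infsum_add infsum_cmult_left)
  finally show ?thesis .
qed

lemma laplacian_abs_le_sup:
  assumes "\<And>z. \<bar>f z\<bar> \<le> S"
  shows "\<bar>laplacian b m f y\<bar> \<le> 2 * C * S"
proof -
  let ?d = "\<Sum>\<^sub>\<infinity>z. b y z"
  have "0 \<le> S"
    using assms[of y] by linarith
  have "(\<Sum>\<^sub>\<infinity>z. b y z * \<bar>f z\<bar>) \<le> (\<Sum>\<^sub>\<infinity>z. b y z * S)"
    using assms b_nonneg
    by (intro infsum_mono summable_on_b_mult[of "\<lambda>z. \<bar>f z\<bar>" S] summable_on_cmult_left b_summable
        mult_left_mono) auto
  also have "\<dots> = ?d * S"
    using b_summable by (simp add: infsum_cmult_left)
  finally have "m y * \<bar>laplacian b m f y\<bar> \<le> ?d * \<bar>f y\<bar> + ?d * S"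
    using laplacian_abs_le[of f S, OF assms, of y] by linarith
  also have "\<dots> \<le> 2 * ?d * S"
    using mult_left_mono[OF assms[of y], of ?d] by (simp add: infsum_nonneg b_nonneg algebra_simps)
  also have "\<dots> \<le> m y * (2 * C * S)"
    using mult_right_mono[OF degree_le[of y] \<open>0 \<le> S\<close>] by (simp add: algebra_simps)
  finally show ?thesis
    using m_pos[of y] by simp
qed

lemma laplacian_weighted_l1_le:
  assumes sup: "\<And>z. \<bar>f z\<bar> \<le> S"
    and l1: "\<And>G. finite G \<Longrightarrow> (\<Sum>z\<in>G. m z * \<bar>f z\<bar>) \<le> B"
    and "finite F"
  shows "(\<Sum>y\<in>F. m y * \<bar>laplacian b m f y\<bar>) \<le> 2 * C * B"
proof -
  have weighted_le: "(\<Sum>z\<in>G. g z * \<bar>f z\<bar>) \<le> C * B"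
    if "finite G" and "\<And>z. g z \<le> C * m z" for G g
  proof -
    have "(\<Sum>z\<in>G. g z * \<bar>f z\<bar>) \<le> (\<Sum>z\<in>G. C * (m z * \<bar>f z\<bar>))"
      using that(2) by (intro sum_mono) (simp add: mult_right_mono flip: mult.assoc)
    also have "\<dots> \<le> C * B"
      using l1[OF \<open>finite G\<close>] C_nonneg by (simp add: mult_left_mono flip: sum_distrib_left)
    finally show ?thesis .
  qed
  have "((\<lambda>z. \<Sum>y\<in>F. b y z * \<bar>f z\<bar>) has_sum (\<Sum>y\<in>F. \<Sum>\<^sub>\<infinity>z. b y z * \<bar>f z\<bar>)) UNIV"
    using \<open>finite F\<close> sup
    by (intro has_sum_sum_finite has_sum_infsum summable_on_b_mult[of "\<lambda>z. \<bar>f z\<bar>" S]) auto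
  \<comment> \<open>by symmetry of b the degree bound applies to the inner sum over y \<in> F\<close>
  then have off_diag: "(\<Sum>y\<in>F. \<Sum>\<^sub>\<infinity>z. b y z * \<bar>f z\<bar>) \<le> C * B"
  proof (rule has_sum_le_finite_sums)
    fix G :: "'a set"
    assume "finite G"
    have "(\<Sum>y\<in>F. b z y) \<le> C * m z" for z
      using finite_sum_le_infsum[OF b_summable \<open>finite F\<close>] b_nonneg degree_le order_trans
      by fastforce
    then have "(\<Sum>z\<in>G. (\<Sum>y\<in>F. b z y) * \<bar>f z\<bar>) \<le> C * B"
      using weighted_le[of G "\<lambda>z. \<Sum>y\<in>F. b z y"] \<open>finite G\<close> by blast
    then show "(\<Sum>z\<in>G. \<Sum>y\<in>F. b y z * \<bar>f z\<bar>) \<le> C * B"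
      by (simp add: sum_distrib_right b_sym)
  qed
  have diag: "(\<Sum>y\<in>F. (\<Sum>\<^sub>\<infinity>z. b y z) * \<bar>f y\<bar>) \<le> C * B"
    using weighted_le[of F "\<lambda>y. \<Sum>\<^sub>\<infinity>z. b y z"] \<open>finite F\<close> degree_le by blast
  have "(\<Sum>y\<in>F. m y * \<bar>laplacian b m f y\<bar>)
      \<le> (\<Sum>y\<in>F. (\<Sum>\<^sub>\<infinity>z. b y z) * \<bar>f y\<bar> + (\<Sum>\<^sub>\<infinity>z. b y z * \<bar>f z\<bar>))"
    by (intro sum_mono laplacian_abs_le[of f S, OF sup])
  also have "\<dots> \<le> 2 * C * B"
    using diag off_diag by (simp add: sum.distrib)
  finally show ?thesis .
qed

lemma laplacian_power_delta_le:
  "(\<forall>y. \<bar>(laplacian b m ^^ k) (delta m x) y\<bar> \<le> (2 * C) ^ k / sqrt (m x)) \<and>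
   (\<forall>F. finite F \<longrightarrow>
      (\<Sum>y\<in>F. m y * \<bar>(laplacian b m ^^ k) (delta m x) y\<bar>) \<le> (2 * C) ^ k * sqrt (m x))"
proof (induction k)
  case 0
  have "(\<Sum>y\<in>F. m y * \<bar>delta m x y\<bar>) \<le> sqrt (m x)" if "finite F" for F
  proof -
    have "(\<Sum>y\<in>F. m y * \<bar>delta m x y\<bar>) = (\<Sum>y\<in>F. if y = x then m x / sqrt (m x) else 0)"
      using m_pos[of x] by (intro sum.cong) (auto simp: delta_def)
    also have "\<dots> \<le> sqrt (m x)"
      using \<open>finite F\<close> m_pos[of x] by (simp add: sum.delta real_div_sqrt)
    finally show ?thesis .
  qed
  then show ?case
    using m_pos[of x] by (simp add: delta_def)
next
  case (Suc k)
  let ?f = "(laplacian b m ^^ k) (delta m x)"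
  have sup: "\<And>z. \<bar>?f z\<bar> \<le> (2 * C) ^ k / sqrt (m x)"
    and l1: "\<And>G. finite G \<Longrightarrow> (\<Sum>z\<in>G. m z * \<bar>?f z\<bar>) \<le> (2 * C) ^ k * sqrt (m x)"
    using Suc.IH by auto
  show ?case
    using laplacian_abs_le_sup[of ?f, OF sup] laplacian_weighted_l1_le[of ?f, OF sup l1]
    by (simp add: mult.assoc)
qed

context
  fixes x :: 'a and N :: nat and A :: "'a set"
  assumes vanishing: "\<And>k y. k < N \<Longrightarrow> y \<in> A \<Longrightarrow> (laplacian b m ^^ k) (delta m x) y = 0"
begin

lemma semigroup_series_term_abs:
  assumes "y \<in> A"
  shows "\<bar>(- t) ^ k / fact k * (laplacian b m ^^ k) (delta m x) y\<bar>
    = (if N \<le> k then \<bar>t\<bar> ^ k / fact k else 0) * \<bar>(laplacian b m ^^ k) (delta m x) y\<bar>"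
  using vanishing[of k y] assms by (simp add: abs_mult power_abs)

lemma semigroup_series_term_le:
  assumes "y \<in> A"
  shows "\<bar>(- t) ^ k / fact k * (laplacian b m ^^ k) (delta m x) y\<bar>
    \<le> (if N \<le> k then (2 * C * \<bar>t\<bar>) ^ k / fact k else 0) / sqrt (m x)"
proof -
  have "\<bar>t\<bar> ^ k / fact k * \<bar>(laplacian b m ^^ k) (delta m x) y\<bar>
      \<le> \<bar>t\<bar> ^ k / fact k * ((2 * C) ^ k / sqrt (m x))"
    using laplacian_power_delta_le[of k x] by (intro mult_left_mono) auto
  then show ?thesis
    using semigroup_series_term_abs[OF assms] by (simp add: power_mult_distrib mult.commute)
qed

lemma summable_abs_semigroup_series:
  assumes "y \<in> A"
  shows "summable (\<lambda>k. \<bar>(- t) ^ k / fact k * (laplacian b m ^^ k) (delta m x) y\<bar>)"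
  using summable_divide[OF summable_exp_tail_terms, of N "2 * C * \<bar>t\<bar>" "sqrt (m x)"]
  by (rule summable_comparison_test') (use semigroup_series_term_le[OF assms] in auto)

lemma semigroup_delta_abs_le:
  assumes "y \<in> A"
  shows "\<bar>semigroup b m t (delta m x) y\<bar> \<le> exp_tail (2 * C * \<bar>t\<bar>) N / sqrt (m x)"
proof -
  have "\<bar>semigroup b m t (delta m x) y\<bar>
      \<le> (\<Sum>k. \<bar>(- t) ^ k / fact k * (laplacian b m ^^ k) (delta m x) y\<bar>)"
    unfolding semigroup_def by (rule summable_rabs[OF summable_abs_semigroup_series[OF assms]])
  also have "\<dots> \<le> (\<Sum>k. (if N \<le> k then (2 * C * \<bar>t\<bar>) ^ k / fact k else 0) / sqrt (m x))"
    by (intro suminf_le summable_abs_semigroup_series[OF assms] summable_divide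
        summable_exp_tail_terms semigroup_series_term_le[OF assms])
  also have "\<dots> = exp_tail (2 * C * \<bar>t\<bar>) N / sqrt (m x)"
    unfolding exp_tail_def by (rule suminf_divide[OF summable_exp_tail_terms])
  finally show ?thesis .
qed

lemma semigroup_series_term_weighted_l1_le:
  assumes "finite F" and "F \<subseteq> A"
  shows "(\<Sum>y\<in>F. m y * \<bar>(- t) ^ k / fact k * (laplacian b m ^^ k) (delta m x) y\<bar>)
    \<le> (if N \<le> k then (2 * C * \<bar>t\<bar>) ^ k / fact k else 0) * sqrt (m x)"
proof -
  let ?c = "if N \<le> k then \<bar>t\<bar> ^ k / fact k else 0"
  have "m y * \<bar>(- t) ^ k / fact k * (laplacian b m ^^ k) (delta m x) y\<bar>
      = ?c * (m y * \<bar>(laplacian b m ^^ k) (delta m x) y\<bar>)" if "y \<in> F" for y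
    unfolding semigroup_series_term_abs[OF subsetD[OF \<open>F \<subseteq> A\<close> that]] by simp
  then have "(\<Sum>y\<in>F. m y * \<bar>(- t) ^ k / fact k * (laplacian b m ^^ k) (delta m x) y\<bar>)
      = (\<Sum>y\<in>F. ?c * (m y * \<bar>(laplacian b m ^^ k) (delta m x) y\<bar>))"
    by (rule sum.cong[OF refl])
  also have "\<dots> = ?c * (\<Sum>y\<in>F. m y * \<bar>(laplacian b m ^^ k) (delta m x) y\<bar>)"
    by (rule sum_distrib_left[symmetric])
  also have "\<dots> \<le> ?c * ((2 * C) ^ k * sqrt (m x))"
    using laplacian_power_delta_le[of k x] \<open>finite F\<close> by (intro mult_left_mono) auto
  also have "\<dots> = (if N \<le> k then (2 * C * \<bar>t\<bar>) ^ k / fact k else 0) * sqrt (m x)"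
    by (simp add: power_mult_distrib)
  finally show ?thesis .
qed

lemma semigroup_delta_weighted_l1_le:
  assumes "finite F" and "F \<subseteq> A"
  shows "(\<Sum>y\<in>F. m y * \<bar>semigroup b m t (delta m x) y\<bar>) \<le> exp_tail (2 * C * \<bar>t\<bar>) N * sqrt (m x)"
proof -
  let ?u = "\<lambda>k y. \<bar>(- t) ^ k / fact k * (laplacian b m ^^ k) (delta m x) y\<bar>"
  have summable: "summable (\<lambda>k. ?u k y)" if "y \<in> F" for y
    using \<open>F \<subseteq> A\<close> that by (intro summable_abs_semigroup_series) auto
  have "(\<Sum>y\<in>F. m y * \<bar>semigroup b m t (delta m x) y\<bar>) \<le> (\<Sum>y\<in>F. m y * (\<Sum>k. ?u k y))"
    unfolding semigroup_def using \<open>F \<subseteq> A\<close> m_pos[THEN less_imp_le]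
    by (intro sum_mono mult_left_mono summable_rabs summable_abs_semigroup_series) auto
  also have "\<dots> = (\<Sum>y\<in>F. \<Sum>k. m y * ?u k y)"
    using summable by (intro sum.cong refl suminf_mult[symmetric])
  also have "\<dots> = (\<Sum>k. \<Sum>y\<in>F. m y * ?u k y)"
    using summable by (intro suminf_sum[symmetric] summable_mult)
  also have "\<dots> \<le> (\<Sum>k. (if N \<le> k then (2 * C * \<bar>t\<bar>) ^ k / fact k else 0) * sqrt (m x))"
    using assms summable
    by (intro suminf_le summable_sum summable_mult summable_mult2 summable_exp_tail_terms
        semigroup_series_term_weighted_l1_le)
  also have "\<dots> = exp_tail (2 * C * \<bar>t\<bar>) N * sqrt (m x)"
    unfolding exp_tail_def by (rule suminf_mult2[OF summable_exp_tail_terms, symmetric])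
  finally show ?thesis .
qed

lemma semigroup_delta_weighted_sq_le:
  assumes "finite F" and "F \<subseteq> A"
  shows "(\<Sum>y\<in>F. m y * (semigroup b m t (delta m x) y)\<^sup>2) \<le> (exp_tail (2 * C * \<bar>t\<bar>) N)\<^sup>2"
  using assms m_pos C_nonneg
  by (intro sum_sq_le_of_sup_l1_bounds[where s = "sqrt (m x)"] semigroup_delta_abs_le semigroup_delta_weighted_l1_le
      exp_tail_nonneg) (auto simp: less_imp_le)

lemma semigroup_delta_sq_summable_on:
  "(\<lambda>y. m y * (semigroup b m t (delta m x) y)\<^sup>2) summable_on A"
  using m_pos semigroup_delta_weighted_sq_le
  by (intro nonneg_summable_on_if_finite_sums_le) (auto simp: less_imp_le)

lemma l2_norm_on_semigroup_delta_le:
  "l2_norm_on m A (semigroup b m t (delta m x)) \<le> exp_tail (2 * C * \<bar>t\<bar>) N"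
proof -
  have "(\<Sum>\<^sub>\<infinity>y\<in>A. m y * (semigroup b m t (delta m x) y)\<^sup>2) \<le> (exp_tail (2 * C * \<bar>t\<bar>) N)\<^sup>2"
    by (rule infsum_le_finite_sums[OF semigroup_delta_sq_summable_on semigroup_delta_weighted_sq_le])
  then show ?thesis
    unfolding l2_norm_on_def using C_nonneg
    by (metis abs_of_nonneg exp_tail_nonneg abs_ge_zero mult_nonneg_nonneg real_sqrt_abs
        real_sqrt_le_mono zero_le_numeral)
qed

end

lemma borel_measurable_l2_norm_on_semigroup_delta [measurable]:
  "(\<lambda>t. l2_norm_on m A (semigroup b m t (delta m x))) \<in> borel_measurable borel"
proof -
  have [measurable]:
    "(\<lambda>t. \<Sum>\<^sub>\<infinity>y\<in>A. m y * (semigroup b m t (delta m x) y)\<^sup>2) \<in> borel_measurable borel"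
    by (rule borel_measurable_infsum_countable)
      (simp_all add: semigroup_delta_sq_summable_on[where N = 0])
  show ?thesis
    unfolding l2_norm_on_def by measurable
qed

lemma Lr_norm_semigroup_delta_le:
  assumes "0 < T" and "1 \<le> r"
    and vanishing: "\<And>k y. k < N \<Longrightarrow> y \<in> A \<Longrightarrow> (laplacian b m ^^ k) (delta m x) y = 0"
  shows "Lr_norm r T (\<lambda>t. l2_norm_on m A (semigroup b m t (delta m x)))
    \<le> ereal (exp_tail (2 * C * T) N * (1 + T))"
proof (rule Lr_norm_le[OF assms(1,2)])
  show "(\<lambda>t. ereal \<bar>l2_norm_on m A (semigroup b m t (delta m x))\<bar>)
      \<in> borel_measurable (restrict_space lborel {0<..<T})"
    by (intro measurable_restrict_space1) measurable
next
  fix t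
  assume "t \<in> {0<..<T}"
  have "0 \<le> l2_norm_on m A (semigroup b m t (delta m x))"
    unfolding l2_norm_on_def using m_pos by (simp add: infsum_nonneg less_imp_le)
  moreover have "exp_tail (2 * C * \<bar>t\<bar>) N \<le> exp_tail (2 * C * T) N"
    using \<open>t \<in> {0<..<T}\<close> C_nonneg by (intro exp_tail_mono mult_left_mono) auto
  ultimately show "\<bar>l2_norm_on m A (semigroup b m t (delta m x))\<bar> \<le> exp_tail (2 * C * T) N"
    using l2_norm_on_semigroup_delta_le[where x = x and N = N and A = A and t = t, OF vanishing] by linarith
qed

lemma Lr_norm_semigroup_delta_tendsto_0:
  assumes "0 < T" and "1 \<le> r"
    and vanishing: "\<And>n k y. k \<le> n \<Longrightarrow> y \<in> A \<Longrightarrow> (laplacian b m ^^ k) (delta m (xs n)) y = 0"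
  shows "(\<lambda>n. Lr_norm r T (\<lambda>t. l2_norm_on m A (semigroup b m t (delta m (xs n))))) \<longlonglongrightarrow> 0"
proof -
  have "(\<lambda>n. ereal (exp_tail (2 * C * T) (Suc n) * (1 + T))) \<longlonglongrightarrow> ereal (0 * (1 + T))"
    by (intro tendsto_ereal tendsto_mult tendsto_const exp_tail_tendsto_0[THEN LIMSEQ_Suc])
  then have bound_to_0: "(\<lambda>n. ereal (exp_tail (2 * C * T) (Suc n) * (1 + T))) \<longlonglongrightarrow> 0"
    by (simp add: zero_ereal_def)
  have "Lr_norm r T (\<lambda>t. l2_norm_on m A (semigroup b m t (delta m (xs n))))
      \<le> ereal (exp_tail (2 * C * T) (Suc n) * (1 + T))" for n
    using vanishing by (intro Lr_norm_semigroup_delta_le[OF assms(1,2)]) (simp add: less_Suc_eq_le)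
  then show ?thesis
    using Lr_norm_nonneg[OF \<open>0 < T\<close>] by (intro tendsto_sandwich[OF _ _ tendsto_const bound_to_0]) auto
qed

end

theorem mainTheorem10:
  fixes b :: "'a::countable \<Rightarrow> 'a \<Rightarrow> real" and m :: "'a \<Rightarrow> real" and D :: "'a set"
  assumes "weighted_graph b m"
    and "graph_connected b"
    and "bounded_degree b m"
    and "bounded_measure m"
    and "\<not> rel_dense b D"
  shows "\<exists>xs :: nat \<Rightarrow> 'a. \<forall>T::real. T > 0 \<longrightarrow> (\<forall>r::ereal. 1 \<le> r \<longrightarrow>
           ((\<lambda>n. Lr_norm r T (\<lambda>t. l2_norm_on m D (semigroup b m t (delta m (xs n)))))
              \<longlonglongrightarrow> 0))"
proof -
  obtain C where C: "\<And>x. 1 / m x * (\<Sum>\<^sub>\<infinity>y. b x y) \<le> C"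
    using assms(3) unfolding bounded_degree_def by blast
  have "0 < m x" for x
    using assms(1) by (simp add: weighted_graph_def)
  then have "(\<Sum>\<^sub>\<infinity>y. b x y) \<le> C * m x" for x
    using C[of x] by (simp add: field_simps)
  then interpret degree_bounded_graph b m C
    by (intro degree_bounded_graph.intro assms(1))
  obtain xs where far: "\<And>n y. y \<in> D \<Longrightarrow> n < d_comb b y (xs n)"
    using not_rel_dense_imp_far_sequence[OF assms(5)] by blast
  have "(laplacian b m ^^ k) (delta m (xs n)) y = 0" if "k \<le> n" and "y \<in> D" for k n y
    using far[OF \<open>y \<in> D\<close>, of n] \<open>k \<le> n\<close>
    by (intro laplacian_power_delta_vanishes[OF assms(1)]) simp
  then show ?thesis
    by (intro exI[of _ xs] allI impI Lr_norm_semigroup_delta_tendsto_0)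
qed

end
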